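(* Let $G$ be a scheduling game on $m$ related machines (speeds $s_1,\dots,s_m>0$, arbitrary machine-dependent priority lists $\pi_1,\dots,\pi_m$) in which all jobs have the same processing-time function $p$, where either $p(t)=b+a t$ for all jobs ($b,a\ge 0$) or $p(t)=\max\{\tau,b-a t\}$ for all jobs ($b,a\ge0$, $\tau>0$). Run the following algorithm: set $\ell_j=0$ for all machines $j$; repeat, until all jobs are assigned: choose $j^\star\in\arg\min_j\big(\ell_j+p(\ell_j)/s_j\big)$, assign to machine $j^\star$ the unassigned job with highest priority in $\pi_{j^\star}$ (smallest $\pi_{j^\star}$-value), and set $\ell_{j^\star}\leftarrow \ell_{j^\star}+p(\ell_{j^\star})/s_{j^\star}$. Then the resulting profile is a pure Nash equilibrium of $G$.
   Context: Scheduling game: a finite set $N$ of $n\ge1$ jobs (players) and a set $M$ of $m\ge1$ machines. Machine $j$ has speed $s_j>0$ and a priority list $\pi_j$, a bijection $N\to\{1,\dots,n\}$; job $u$ has higher priority than $v$ on $j$ iff $\pi_j(u)<\pi_j(v)$. Each job $i$ has a processing-time function $p_i$: with positive deterioration $p_i(t)=b_i+a_it$ ($b_i,a_i\ge0$), with negative deterioration $p_i(t)=\max\{\tau_i,b_i-a_it\}$ ($b_i,a_i\ge0$, $\tau_i>0$). A profile $\sigma\in M^N$ assigns each job to a machine. On machine $j$, the jobs assigned to it, listed in increasing $\pi_j$-order as $i_1,i_2,\dots$, are processed without idle time: $S_{i_1}(\sigma)=0$, $C_{i_k}(\sigma)=S_{i_k}(\sigma)+p_{i_k}(S_{i_k}(\sigma))/s_j$,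 $S_{i_{k+1}}(\sigma)=C_{i_k}(\sigma)$. The cost of job $i$ is its completion time $C_i(\sigma)$. A pure Nash equilibrium (NE) is a profile in which no job can strictly decrease its completion time by unilaterally changing its machine. *)

theory Defs
  imports Complex_Main
begin

text \<open>A priority list of machine j is
  pri j :: 'j \<Rightarrow> nat, a bijection from N onto {1..n}.
  P i :: real \<Rightarrow> real is the processing-time function of job i.\<close>

text \<open>The jobs assigned to machine j under profile sigma, listed in increasing
  priority-value order (highest priority first).\<close>
definition machine_list ::
  "('m \<Rightarrow> 'j \<Rightarrow> nat) \<Rightarrow> 'j set \<Rightarrow> ('j \<Rightarrow> 'm) \<Rightarrow> 'm \<Rightarrow> 'j list" where
  "machine_list pri N sigma j =
     (SOME xs. distinct xs \<and> set xs = {i \<in> N. sigma i = j}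
              \<and> sorted_wrt (\<lambda>u v. pri j u < pri j v) xs)"

fun comp_time :: "('j \<Rightarrow> real \<Rightarrow> real) \<Rightarrow> real \<Rightarrow> real \<Rightarrow> 'j list \<Rightarrow> 'j \<Rightarrow> real" where
  "comp_time P sp t [] i = 0"
| "comp_time P sp t (x # xs) i =
     (let c = t + P x t / sp in if x = i then c else comp_time P sp c xs i)"

definition completion ::
  "('j \<Rightarrow> real \<Rightarrow> real) \<Rightarrow> ('m \<Rightarrow> real) \<Rightarrow> ('m \<Rightarrow> 'j \<Rightarrow> nat) \<Rightarrow> 'j set
     \<Rightarrow> ('j \<Rightarrow> 'm) \<Rightarrow> 'j \<Rightarrow> real" where
  "completion P s pri N sigma i =
     comp_time P (s (sigma i)) 0 (machine_list pri N sigma (sigma i)) i"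

definition is_NE ::
  "('j \<Rightarrow> real \<Rightarrow> real) \<Rightarrow> ('m \<Rightarrow> real) \<Rightarrow> ('m \<Rightarrow> 'j \<Rightarrow> nat) \<Rightarrow> 'j set \<Rightarrow> 'm set
     \<Rightarrow> ('j \<Rightarrow> 'm) \<Rightarrow> bool" where
  "is_NE P s pri N M sigma \<longleftrightarrow>
     (\<forall>i\<in>N. sigma i \<in> M) \<and>
     (\<forall>i\<in>N. \<forall>j\<in>M. \<not> (completion P s pri N (sigma(i := j)) i < completion P s pri N sigma i))"

text \<open>One iteration of the greedy algorithm. State: (loads l, unassigned jobs U,
  partial profile sigma). Any minimiser j* may be chosen (arbitrary tie-breaking).\<close>
inductive alg_step ::
  "(real \<Rightarrow> real) \<Rightarrow> ('m \<Rightarrow> real) \<Rightarrow> ('m \<Rightarrow> 'j \<Rightarrow> nat) \<Rightarrow> 'm set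
     \<Rightarrow> ('m \<Rightarrow> real) \<times> 'j set \<times> ('j \<Rightarrow> 'm)
     \<Rightarrow> ('m \<Rightarrow> real) \<times> 'j set \<times> ('j \<Rightarrow> 'm) \<Rightarrow> bool"
  for p s pri M where
  "\<lbrakk> jst \<in> M;
     \<forall>j\<in>M. l jst + p (l jst) / s jst \<le> l j + p (l j) / s j;
     i \<in> U;
     \<forall>k\<in>U. pri jst i \<le> pri jst k \<rbrakk>
   \<Longrightarrow> alg_step p s pri M (l, U, sigma)
         (l(jst := l jst + p (l jst) / s jst), U - {i}, sigma(i := jst))"

end

theory Submission
  imports Defs
begin

(* With a common processing function p, the k-th job on a machine of speed s_j completes at
   the k-fold iterate of t \<mapsto> t + p t / s_j at 0, which is nondecreasing in k because
   p \<ge> 0 on [0, \<infinity>); this is all that is used about the shape of p.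
   The greedy algorithm keeps the invariant that every assigned job completes no later than it
   would after moving to any machine j, counting only the assigned jobs ahead of it on j.
   An assigned job precedes every unassigned one on its own machine, so the newly assigned job
   comes after all assigned jobs on every machine: its completion time on j is
   l_j + p(l_j)/s_j, which the greedy choice minimises. It delays nobody on its own machine,
   and elsewhere it can only lengthen the queue a deviating job would join. *)

definition load_after :: "(real \<Rightarrow> real) \<Rightarrow> real \<Rightarrow> nat \<Rightarrow> real" where
  "load_after p sp k = ((\<lambda>t. t + p t / sp) ^^ k) 0"

lemma load_after_0 [simp]: "load_after p sp 0 = 0"
  by (simp add: load_after_def)

lemma load_after_Suc: "load_after p sp (Suc k) = load_after p sp k + p (load_after p sp k) / sp"
  by (simp add: load_after_def)

lemma load_after_mono:
  assumes "sp > 0" "\<forall>t\<ge>0. 0 \<le> p t" "k \<le> k'"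
  shows "load_after p sp k \<le> load_after p sp k'"
proof -
  have nonneg: "0 \<le> load_after p sp n" for n
    by (induction n) (use assms in \<open>auto simp: load_after_Suc\<close>)
  have "load_after p sp n \<le> load_after p sp (Suc n)" for n
    using nonneg[of n] assms by (simp add: load_after_Suc)
  then show ?thesis using assms(3) by (rule lift_Suc_mono_le)
qed

lemma comp_time_sorted_wrt:
  fixes f :: "'a \<Rightarrow> nat"
  assumes "distinct xs" "sorted_wrt (\<lambda>u v. f u < f v) xs" "i \<in> set xs" "\<forall>x\<in>set xs. P x = p"
  shows "comp_time P sp t xs i = ((\<lambda>t. t + p t / sp) ^^ Suc (card {x\<in>set xs. f x < f i})) t"
  using assms
proof (induction xs arbitrary: t)
  case Nil
  then show ?case by simp
next
  case (Cons x xs)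
  show ?case
  proof (cases "x = i")
    case True
    with Cons.prems(2) have none_ahead: "{y\<in>set (x # xs). f y < f i} = {}" by auto
    show ?thesis unfolding none_ahead using True Cons.prems(4) by (simp add: Let_def)
  next
    case False
    with Cons.prems(3) have i: "i \<in> set xs" by simp
    with Cons.prems(1,2) have "{y\<in>set (x # xs). f y < f i} = insert x {y\<in>set xs. f y < f i}"
      and "x \<notin> set xs" by auto
    then have card: "card {y\<in>set (x # xs). f y < f i} = Suc (card {y\<in>set xs. f y < f i})"
      by simp
    have "comp_time P sp t (x # xs) i = comp_time P sp (t + p t / sp) xs i"
      using False Cons.prems(4) by (simp add: Let_def)
    also have "\<dots> = ((\<lambda>t. t + p t / sp) ^^ Suc (card {y\<in>set xs. f y < f i})) (t + p t / sp)"
      using Cons.IH Cons.prems i by simp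
    also have "\<dots> = ((\<lambda>t. t + p t / sp) ^^ Suc (card {y\<in>set (x # xs). f y < f i})) t"
      unfolding card by (simp only: funpow_Suc_right o_apply)
    finally show ?thesis .
  qed
qed

lemma exists_sorted_wrt_list_of_inj_on:
  fixes f :: "'a \<Rightarrow> nat"
  assumes "finite S" "inj_on f S"
  shows "\<exists>xs. distinct xs \<and> set xs = S \<and> sorted_wrt (\<lambda>u v. f u < f v) xs"
proof -
  obtain ys where ys: "distinct ys" "set ys = S"
    using finite_distinct_list[OF assms(1)] by blast
  let ?xs = "sort_key f ys"
  have "distinct (map f ?xs)"
    using ys assms(2) by (simp add: distinct_map)
  then have "sorted_wrt (<) (map f ?xs)"
    by (simp add: strict_sorted_iff)
  with ys show ?thesis
    by (intro exI[of _ ?xs]) (simp add: sorted_wrt_map)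
qed

lemma machine_list:
  assumes "finite N" "inj_on (pri j) N"
  shows "distinct (machine_list pri N sigma j)"
    and "set (machine_list pri N sigma j) = {i\<in>N. sigma i = j}"
    and "sorted_wrt (\<lambda>u v. pri j u < pri j v) (machine_list pri N sigma j)"
proof -
  have "\<exists>xs. distinct xs \<and> set xs = {i\<in>N. sigma i = j} \<and> sorted_wrt (\<lambda>u v. pri j u < pri j v) xs"
    using assms by (intro exists_sorted_wrt_list_of_inj_on) (auto intro: inj_on_subset)
  from someI_ex[OF this] show "distinct (machine_list pri N sigma j)"
    and "set (machine_list pri N sigma j) = {i\<in>N. sigma i = j}"
    and "sorted_wrt (\<lambda>u v. pri j u < pri j v) (machine_list pri N sigma j)"
    unfolding machine_list_def by blast+
qed

text \<open>Excluding i itself makes the set independent of the machine i currently occupies, so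
  staying and deviating are described by the same expression.\<close>
definition jobs_ahead :: "('m \<Rightarrow> 'j \<Rightarrow> nat) \<Rightarrow> 'j set \<Rightarrow> ('j \<Rightarrow> 'm) \<Rightarrow> 'm \<Rightarrow> 'j \<Rightarrow> 'j set" where
  "jobs_ahead pri A sigma j i = {x\<in>A. sigma x = j \<and> x \<noteq> i \<and> pri j x < pri j i}"

definition time_on ::
  "(real \<Rightarrow> real) \<Rightarrow> ('m \<Rightarrow> real) \<Rightarrow> ('m \<Rightarrow> 'j \<Rightarrow> nat) \<Rightarrow> 'j set \<Rightarrow> ('j \<Rightarrow> 'm)
     \<Rightarrow> 'm \<Rightarrow> 'j \<Rightarrow> real" where
  "time_on p s pri A sigma j i = load_after p (s j) (Suc (card (jobs_ahead pri A sigma j i)))"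

definition no_better_machine ::
  "(real \<Rightarrow> real) \<Rightarrow> ('m \<Rightarrow> real) \<Rightarrow> ('m \<Rightarrow> 'j \<Rightarrow> nat) \<Rightarrow> 'm set \<Rightarrow> 'j set \<Rightarrow> ('j \<Rightarrow> 'm)
     \<Rightarrow> bool" where
  "no_better_machine p s pri M A sigma \<longleftrightarrow>
     (\<forall>i\<in>A. \<forall>j\<in>M. time_on p s pri A sigma (sigma i) i \<le> time_on p s pri A sigma j i)"

lemma completion_fun_upd:
  assumes "finite N" "i \<in> N" "inj_on (pri j) N" "\<forall>x\<in>N. P x = p"
  shows "completion P s pri N (sigma(i := j)) i = time_on p s pri N sigma j i"
proof -
  let ?xs = "machine_list pri N (sigma(i := j)) j"
  have "{x\<in>set ?xs. pri j x < pri j i} = jobs_ahead pri N sigma j i"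
    using machine_list(2)[of N pri j, OF assms(1,3)] by (auto simp: jobs_ahead_def)
  moreover have "comp_time P (s j) 0 ?xs i
      = ((\<lambda>t. t + p t / s j) ^^ Suc (card {x\<in>set ?xs. pri j x < pri j i})) 0"
    using machine_list[of N pri j, OF assms(1,3)] assms(2,4) by (intro comp_time_sorted_wrt) auto
  ultimately show ?thesis
    by (simp add: completion_def time_on_def load_after_def)
qed

lemma is_NE_if_no_better_machine:
  assumes "finite N" "\<forall>j\<in>M. inj_on (pri j) N" "\<forall>i\<in>N. P i = p"
    and "\<forall>i\<in>N. sigma i \<in> M" "no_better_machine p s pri M N sigma"
  shows "is_NE P s pri N M sigma"
  unfolding is_NE_def
proof (intro conjI ballI)
  fix i j assume i: "i \<in> N" and j: "j \<in> M"
  have "completion P s pri N (sigma(i := sigma i)) i = time_on p s pri N sigma (sigma i) i"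
    using assms(1-4) i by (intro completion_fun_upd) auto
  moreover have "completion P s pri N (sigma(i := j)) i = time_on p s pri N sigma j i"
    using assms(1-3) i j by (intro completion_fun_upd) auto
  ultimately show "\<not> completion P s pri N (sigma(i := j)) i < completion P s pri N sigma i"
    using assms(5) i j by (auto simp: no_better_machine_def not_less)
qed (use assms(4) in blast)

lemma jobs_ahead_insert:
  assumes "i0 \<notin> A" "\<not> (j = j0 \<and> pri j i0 < pri j i)"
  shows "jobs_ahead pri (insert i0 A) (sigma(i0 := j0)) j i = jobs_ahead pri A sigma j i"
  using assms by (auto simp: jobs_ahead_def)

lemma time_on_insert_ge:
  assumes "finite A" "i0 \<notin> A" "s j > 0" "\<forall>t\<ge>0. 0 \<le> p t"
  shows "time_on p s pri A sigma j i \<le> time_on p s pri (insert i0 A) (sigma(i0 := j0)) j i"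
proof -
  have "jobs_ahead pri A sigma j i \<subseteq> jobs_ahead pri (insert i0 A) (sigma(i0 := j0)) j i"
    using assms(2) by (auto simp: jobs_ahead_def)
  moreover have "finite (jobs_ahead pri (insert i0 A) (sigma(i0 := j0)) j i)"
    using assms(1) by (simp add: jobs_ahead_def)
  ultimately show ?thesis
    unfolding time_on_def using assms(3,4) by (intro load_after_mono) (auto intro: card_mono)
qed

lemma jobs_ahead_of_last:
  assumes "i0 \<notin> A" "\<forall>x\<in>A. pri (sigma x) x < pri (sigma x) i0"
  shows "jobs_ahead pri A sigma j i0 = {x\<in>A. sigma x = j}"
  using assms by (auto simp: jobs_ahead_def)

lemma no_better_machine_insert_last:
  assumes "finite A" "i0 \<notin> A" "\<forall>j\<in>M. s j > 0" "\<forall>t\<ge>0. 0 \<le> p t"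
    and last: "\<forall>x\<in>A. pri (sigma x) x < pri (sigma x) i0"
    and greedy: "\<forall>j\<in>M. time_on p s pri A sigma j0 i0 \<le> time_on p s pri A sigma j i0"
    and stable: "no_better_machine p s pri M A sigma"
  shows "no_better_machine p s pri M (insert i0 A) (sigma(i0 := j0))"
  unfolding no_better_machine_def
proof (intro ballI)
  fix i j assume i: "i \<in> insert i0 A" and j: "j \<in> M"
  let ?A' = "insert i0 A" and ?sigma' = "sigma(i0 := j0)"
  show "time_on p s pri ?A' ?sigma' (?sigma' i) i \<le> time_on p s pri ?A' ?sigma' j i"
  proof (cases "i = i0")
    case True
    then show ?thesis
      using greedy j assms(2) by (simp add: time_on_def jobs_ahead_insert)
  next
    case False
    with i have "i \<in> A" by simp
    with last have "\<not> pri (sigma i) i0 < pri (sigma i) i" by force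
    with assms(2) have "time_on p s pri ?A' ?sigma' (?sigma' i) i = time_on p s pri A sigma (sigma i) i"
      using False by (simp add: time_on_def jobs_ahead_insert)
    also have "\<dots> \<le> time_on p s pri A sigma j i"
      using stable \<open>i \<in> A\<close> j by (simp add: no_better_machine_def)
    also have "\<dots> \<le> time_on p s pri ?A' ?sigma' j i"
      using assms(1-4) j by (intro time_on_insert_ge) auto
    finally show ?thesis .
  qed
qed

lemma card_fun_upd_insert:
  assumes "finite A" "i0 \<notin> A"
  shows "card {x\<in>insert i0 A. (sigma(i0 := j0)) x = j} =
    (if j = j0 then Suc (card {x\<in>A. sigma x = j}) else card {x\<in>A. sigma x = j})"
proof -
  have "{x\<in>insert i0 A. (sigma(i0 := j0)) x = j} =
      (if j = j0 then insert i0 {x\<in>A. sigma x = j} else {x\<in>A. sigma x = j})"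
    using assms(2) by auto
  then show ?thesis
    using assms by simp
qed

definition greedy_inv ::
  "(real \<Rightarrow> real) \<Rightarrow> ('m \<Rightarrow> real) \<Rightarrow> ('m \<Rightarrow> 'j \<Rightarrow> nat) \<Rightarrow> 'j set \<Rightarrow> 'm set
     \<Rightarrow> ('m \<Rightarrow> real) \<times> 'j set \<times> ('j \<Rightarrow> 'm) \<Rightarrow> bool" where
  "greedy_inv p s pri N M = (\<lambda>(l, U, sigma).
     U \<subseteq> N \<and>
     (\<forall>j\<in>M. l j = load_after p (s j) (card {x\<in>N - U. sigma x = j})) \<and>
     (\<forall>i\<in>N - U. sigma i \<in> M) \<and>
     (\<forall>x\<in>N - U. \<forall>k\<in>U. pri (sigma x) x < pri (sigma x) k) \<and>
     no_better_machine p s pri M (N - U) sigma)"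

lemma greedy_inv_alg_step:
  assumes step: "alg_step p s pri M st st'" and inv: "greedy_inv p s pri N M st"
    and "finite N" "\<forall>j\<in>M. s j > 0" "\<forall>j\<in>M. inj_on (pri j) N" "\<forall>t\<ge>0. 0 \<le> p t"
  shows "greedy_inv p s pri N M st'"
  using step
proof cases
  case (1 j0 l i0 U sigma)
  let ?A = "N - U"
  from inv 1 have U: "U \<subseteq> N"
    and loads: "\<forall>j\<in>M. l j = load_after p (s j) (card {x\<in>?A. sigma x = j})"
    and machines: "\<forall>i\<in>?A. sigma i \<in> M"
    and ahead: "\<forall>x\<in>?A. \<forall>k\<in>U. pri (sigma x) x < pri (sigma x) k"
    and stable: "no_better_machine p s pri M ?A sigma"
    unfolding greedy_inv_def by auto
  have A': "N - (U - {i0}) = insert i0 ?A" and new: "i0 \<notin> ?A"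
    using 1 U by auto
  have fin_A: "finite ?A" using assms(3) by simp
  have last: "\<forall>x\<in>?A. pri (sigma x) x < pri (sigma x) i0"
    using ahead 1 by blast
  have time_on_new: "time_on p s pri ?A sigma j i0 = l j + p (l j) / s j" if "j \<in> M" for j
    using loads that new last by (simp add: time_on_def jobs_ahead_of_last load_after_Suc)
  let ?sigma' = "sigma(i0 := j0)"
  have stable': "no_better_machine p s pri M (insert i0 ?A) ?sigma'"
    using fin_A new assms(4,6) last stable 1
    by (intro no_better_machine_insert_last) (auto simp: time_on_new)
  have loads': "\<forall>j\<in>M. (l(j0 := l j0 + p (l j0) / s j0)) j
      = load_after p (s j) (card {x\<in>insert i0 ?A. ?sigma' x = j})"
    unfolding card_fun_upd_insert[OF fin_A new] using loads 1 by (simp add: load_after_Suc)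
  have "inj_on (pri j0) N"
    using 1 assms(5) by blast
  then have "pri j0 i0 < pri j0 k" if "k \<in> U - {i0}" for k
    using 1 that U by (fastforce dest: inj_onD simp: order_less_le)
  then have ahead': "\<forall>x\<in>insert i0 ?A. \<forall>k\<in>U - {i0}. pri (?sigma' x) x < pri (?sigma' x) k"
    using ahead by auto
  have machines': "\<forall>i\<in>insert i0 ?A. ?sigma' i \<in> M"
    using machines 1 by simp
  show ?thesis
    unfolding 1 greedy_inv_def prod.case A' using U stable' loads' machines' ahead' by blast
qed

lemma greedy_inv_rtranclp_alg_step:
  assumes "(alg_step p s pri M)\<^sup>*\<^sup>* st st'" "greedy_inv p s pri N M st"
    and "finite N" "\<forall>j\<in>M. s j > 0" "\<forall>j\<in>M. inj_on (pri j) N" "\<forall>t\<ge>0. 0 \<le> p t"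
  shows "greedy_inv p s pri N M st'"
  using assms(1,2) by induction (use greedy_inv_alg_step assms(3-6) in blast)+

lemma greedy_inv_init: "greedy_inv p s pri N M ((\<lambda>_. 0), N, sigma0)"
  unfolding greedy_inv_def prod.case by (simp add: no_better_machine_def)

theorem theorem1:
  fixes N :: "'j set" and M :: "'m set"
    and s :: "'m \<Rightarrow> real" and pri :: "'m \<Rightarrow> 'j \<Rightarrow> nat"
    and P :: "'j \<Rightarrow> real \<Rightarrow> real" and p :: "real \<Rightarrow> real"
    and sigma0 sigma :: "'j \<Rightarrow> 'm" and l :: "'m \<Rightarrow> real"
  assumes "finite N" "N \<noteq> {}" "finite M" "M \<noteq> {}"
    and "\<forall>j\<in>M. s j > 0"
    and "\<forall>j\<in>M. bij_betw (pri j) N {1..card N}"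
    and "\<forall>i\<in>N. P i = p"
    and "(\<exists>a b. a \<ge> 0 \<and> b \<ge> 0 \<and> p = (\<lambda>t. b + a * t))
       \<or> (\<exists>a b \<tau>. a \<ge> 0 \<and> b \<ge> 0 \<and> \<tau> > 0 \<and> p = (\<lambda>t. max \<tau> (b - a * t)))"
    and "(alg_step p s pri M)\<^sup>*\<^sup>* ((\<lambda>_. 0), N, sigma0) (l, {}, sigma)"
  shows "is_NE P s pri N M sigma"
proof -
  have inj: "\<forall>j\<in>M. inj_on (pri j) N"
    using assms(6) bij_betw_imp_inj_on by blast
  have nonneg: "\<forall>t\<ge>0. 0 \<le> p t"
    using assms(8) by (auto simp: max_def)
  have "greedy_inv p s pri N M (l, {}, sigma)"
    using assms(9) greedy_inv_init assms(1,5) inj nonneg by (rule greedy_inv_rtranclp_alg_step)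
  then have "\<forall>i\<in>N. sigma i \<in> M" and "no_better_machine p s pri M N sigma"
    by (simp_all add: greedy_inv_def)
  with assms(1,7) inj show ?thesis
    by (intro is_NE_if_no_better_machine)
qed

end
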